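(* Let $n\equiv 2\pmod 4$. Let $E$ be a non-empty subset of $\{1,3,\dots,n-1\}$, let $I\subseteq\{0,1,\dots,n/2\}$, and suppose $E\cap\{i,n-i\}=\emptyset$ for all $i\in I$. Then the hypercube $Q_n$ admits a $D$-magic labeling for $$D=E\cup\bigcup_{i\in I}\{i,n-i\}.$$
   Context: The hypercube $Q_n$ has vertex set $\mathbb{F}_2^n$, two vertices adjacent iff they differ in exactly one coordinate; $d(x,y)$ is the graph distance. For a set of distances $D$ and a vertex $x$ of a graph $G$, $N_D(x)=\{y\in V(G): d(x,y)\in D\}$. For a graph $G$ of order $N$, a $D$-magic labeling is a bijection $f:V(G)\to\{1,\dots,N\}$ for which there exists a constant $k$ with $\sum_{y\in N_D(x)}f(y)=k$ for every vertex $x$. *)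

theory Defs
  imports Main
begin

fun walk :: "('a \<Rightarrow> 'a \<Rightarrow> bool) \<Rightarrow> 'a list \<Rightarrow> bool" where
  "walk Adj [] = True"
| "walk Adj [x] = True"
| "walk Adj (x # y # xs) = (Adj x y \<and> walk Adj (y # xs))"

text \<open>Graph distance: least number of edges in a walk within V from x to y
  (only meaningful for connected graphs, as the hypercube is).\<close>
definition graph_dist :: "'a set \<Rightarrow> ('a \<Rightarrow> 'a \<Rightarrow> bool) \<Rightarrow> 'a \<Rightarrow> 'a \<Rightarrow> nat" where
  "graph_dist V Adj x y =
     (LEAST k. \<exists>xs. length xs = Suc k \<and> set xs \<subseteq> V \<and> walk Adj xs
                    \<and> hd xs = x \<and> last xs = y)"

definition hcube_verts :: "nat \<Rightarrow> bool list set" where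
  "hcube_verts n = {x. length x = n}"

definition hcube_adj :: "bool list \<Rightarrow> bool list \<Rightarrow> bool" where
  "hcube_adj x y = (length x = length y \<and> card {i. i < length x \<and> x ! i \<noteq> y ! i} = 1)"

definition dist_nbhd :: "'a set \<Rightarrow> ('a \<Rightarrow> 'a \<Rightarrow> bool) \<Rightarrow> nat set \<Rightarrow> 'a \<Rightarrow> 'a set" where
  "dist_nbhd V Adj D x = {y \<in> V. graph_dist V Adj x y \<in> D}"

definition is_D_magic_labeling :: "'a set \<Rightarrow> ('a \<Rightarrow> 'a \<Rightarrow> bool) \<Rightarrow> nat set \<Rightarrow> ('a \<Rightarrow> nat) \<Rightarrow> bool" where
  "is_D_magic_labeling V Adj D f \<longleftrightarrow>
     bij_betw f V {1..card V} \<and>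
     (\<exists>k. \<forall>x\<in>V. (\<Sum>y\<in>dist_nbhd V Adj D x. f y) = k)"

definition D_magic :: "'a set \<Rightarrow> ('a \<Rightarrow> 'a \<Rightarrow> bool) \<Rightarrow> nat set \<Rightarrow> bool" where
  "D_magic V Adj D \<longleftrightarrow> (\<exists>f. is_D_magic_labeling V Adj D f)"

end

theory Submission
  imports Defs "HOL-Library.Nat_Bijection"
begin

text \<open>Identify a vertex of \<open>Q\<^sub>n\<close> with the set of its coordinates equal to 1. The distance
  is then the size of the symmetric difference, so \<open>N\<^sub>D(X) = {X \<triangle> Z : |Z| \<in> D}\<close>.
  Label \<open>Y\<close> by one plus the binary number whose \<open>k\<close>-th digit is the parity of \<open>|Y \<inter> S\<^sub>k|\<close>,
  for \<open>n\<close> explicit windows \<open>S\<^sub>k\<close> of size \<open>n/2\<close>. As \<open>n/2\<close> is odd, these parity functionals are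
  linearly independent over \<open>F\<^sub>2\<close>, so the labelling is a bijection onto \<open>{1..2\<^sup>n}\<close>.
  The \<open>k\<close>-th digit of the label of \<open>X \<triangle> Z\<close> is that of \<open>X\<close> flipped by that of \<open>Z\<close>, and exactly
  half of the sets \<open>Z\<close> with \<open>|Z| \<in> D\<close> have odd \<open>|Z \<inter> S\<^sub>k|\<close>: an involution pairs them off,
  exchanging \<open>S\<^sub>k\<close> with its complement when \<open>|Z|\<close> is odd and complementing \<open>Z\<close> when \<open>|Z|\<close> is
  even (which keeps \<open>|Z|\<close> in \<open>D\<close>, as the even part of \<open>D\<close> is closed under \<open>d \<mapsto> n - d\<close>).
  So every digit contributes the same amount to every neighbourhood sum.\<close>

definition hamming_dist :: "bool list \<Rightarrow> bool list \<Rightarrow> nat" where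
  "hamming_dist x y = card {i. i < length x \<and> x ! i \<noteq> y ! i}"

lemma hcube_adj_iff: "hcube_adj x y \<longleftrightarrow> length x = length y \<and> hamming_dist x y = 1"
  unfolding hcube_adj_def hamming_dist_def ..

lemma hamming_dist_triangle:
  assumes "length x = length y"
  shows "hamming_dist x z \<le> hamming_dist x y + hamming_dist y z"
proof -
  have "{i. i < length x \<and> x ! i \<noteq> z ! i}
      \<subseteq> {i. i < length x \<and> x ! i \<noteq> y ! i} \<union> {i. i < length y \<and> y ! i \<noteq> z ! i}"
    using assms by auto
  then have "hamming_dist x z \<le> card ({i. i < length x \<and> x ! i \<noteq> y ! i} \<union> {i. i < length y \<and> y ! i \<noteq> z ! i})"
    unfolding hamming_dist_def by (intro card_mono) auto
  also have "\<dots> \<le> hamming_dist x y + hamming_dist y z"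
    unfolding hamming_dist_def by (rule card_Un_le)
  finally show ?thesis .
qed

lemma hamming_dist_walk_le:
  "walk hcube_adj xs \<Longrightarrow> xs \<noteq> [] \<Longrightarrow> hamming_dist (hd xs) (last xs) \<le> length xs - 1"
proof (induction hcube_adj xs rule: walk.induct)
  case (3 x y xs)
  then have "hcube_adj x y" "hamming_dist y (last (y # xs)) \<le> length xs"
    by auto
  then show ?case
    using hamming_dist_triangle[of x y "last (y # xs)"] by (auto simp: hcube_adj_iff)
qed (simp_all add: hamming_dist_def)

lemma ex_walk_hamming_dist:
  "length x = n \<Longrightarrow> length y = n \<Longrightarrow>
   \<exists>xs. length xs = Suc (hamming_dist x y) \<and> set xs \<subseteq> hcube_verts n \<and> walk hcube_adj xs
        \<and> hd xs = x \<and> last xs = y"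
proof (induction "hamming_dist x y" arbitrary: x)
  case 0
  then have "x = y" unfolding hamming_dist_def by (intro nth_equalityI) auto
  then show ?case using 0 by (intro exI[of _ "[x]"]) (auto simp: hcube_verts_def)
next
  case (Suc k)
  then obtain i where i: "i < n" "x ! i \<noteq> y ! i"
    unfolding hamming_dist_def by (metis (mono_tags, lifting) card.empty empty_Collect_eq nat.distinct(1))
  define x' where "x' = x[i := y ! i]"
  have "{j. j < length x' \<and> x' ! j \<noteq> y ! j} = {j. j < length x \<and> x ! j \<noteq> y ! j} - {i}"
    using i Suc.prems by (auto simp: x'_def nth_list_update)
  then have "k = hamming_dist x' y"
    using Suc.hyps(2) i Suc.prems unfolding hamming_dist_def by simp
  moreover have "length x' = n" using Suc.prems by (simp add: x'_def)
  ultimately obtain xs where xs: "length xs = Suc k" "set xs \<subseteq> hcube_verts n"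
      "walk hcube_adj xs" "hd xs = x'" "last xs = y"
    using Suc.hyps(1) Suc.prems(2) by blast
  have "{j. j < length x \<and> x ! j \<noteq> x' ! j} = {i}"
    using i Suc.prems by (auto simp: x'_def nth_list_update)
  then have "hcube_adj x x'" by (simp add: hcube_adj_def x'_def)
  moreover obtain z zs where "xs = z # zs" using xs(1) by (cases xs) auto
  ultimately show ?case
    using xs Suc by (intro exI[of _ "x # xs"]) (auto simp: hcube_verts_def)
qed

lemma hcube_graph_dist:
  assumes "length x = n" "length y = n"
  shows "graph_dist (hcube_verts n) hcube_adj x y = hamming_dist x y"
  unfolding graph_dist_def
proof (rule Least_equality)
  fix k
  assume "\<exists>xs. length xs = Suc k \<and> set xs \<subseteq> hcube_verts n \<and> walk hcube_adj xs
              \<and> hd xs = x \<and> last xs = y"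
  then show "hamming_dist x y \<le> k" using hamming_dist_walk_le by force
qed (use ex_walk_hamming_dist[OF assms] in blast)

definition bits :: "nat \<Rightarrow> bool list \<Rightarrow> nat set" where
  "bits n x = {i. i < n \<and> x ! i}"

lemma bij_betw_bits: "bij_betw (bits n) (hcube_verts n) (Pow {..<n})"
  by (rule bij_betw_byWitness[where f' = "\<lambda>Y. map (\<lambda>i. i \<in> Y) [0..<n]"])
    (auto simp: bits_def hcube_verts_def intro: nth_equalityI)

lemma hamming_dist_bits:
  assumes "length x = n" "length y = n"
  shows "hamming_dist x y = card (sym_diff (bits n x) (bits n y))"
proof -
  have "{i. i < length x \<and> x ! i \<noteq> y ! i} = sym_diff (bits n x) (bits n y)"
    using assms unfolding bits_def by auto
  then show ?thesis unfolding hamming_dist_def by simp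
qed

lemma hcube_graph_dist_bits:
  assumes "x \<in> hcube_verts n" "y \<in> hcube_verts n"
  shows "graph_dist (hcube_verts n) hcube_adj x y = card (sym_diff (bits n x) (bits n y))"
proof -
  have "length x = n" "length y = n" using assms by (simp_all add: hcube_verts_def)
  then show ?thesis by (simp add: hcube_graph_dist hamming_dist_bits)
qed

lemma card_sym_diff:
  assumes "finite A" "finite B"
  shows "card (sym_diff A B) + 2 * card (A \<inter> B) = card A + card B"
proof -
  have "card (sym_diff A B) = card (A - B) + card (B - A)"
    using assms by (subst card_Un_disjoint) auto
  moreover have "card A = card (A - B) + card (A \<inter> B)" "card B = card (B - A) + card (A \<inter> B)"
    using assms by (metis Diff_Diff_Int Int_commute card_Diff_subset_Int card_mono finite_Int
        inf_le1 le_add_diff_inverse2)+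
  ultimately show ?thesis by simp
qed

lemma odd_card_sym_diff:
  assumes "finite A" "finite B"
  shows "odd (card (sym_diff A B)) \<longleftrightarrow> odd (card A) \<noteq> odd (card B)"
  using card_sym_diff[OF assms] by presburger

lemma odd_card_sym_diff_Int:
  assumes "finite A" "finite B"
  shows "odd (card (sym_diff A B \<inter> S)) \<longleftrightarrow> odd (card (A \<inter> S)) \<noteq> odd (card (B \<inter> S))"
proof -
  have "sym_diff A B \<inter> S = sym_diff (A \<inter> S) (B \<inter> S)" by auto
  then show ?thesis using odd_card_sym_diff[of "A \<inter> S" "B \<inter> S"] assms by simp
qed

definition window :: "nat \<Rightarrow> nat \<Rightarrow> nat set" where
  "window n k = (if k < n div 2 then insert k {n div 2..<n - 1} else insert k {1..<n div 2})"

definition parity_pattern :: "nat \<Rightarrow> nat set \<Rightarrow> nat set" where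
  "parity_pattern n Y = {k. k < n \<and> odd (card (Y \<inter> window n k))}"

lemma window_subset: "k < n \<Longrightarrow> window n k \<subseteq> {..<n}"
  unfolding window_def by auto

lemma card_window: "even n \<Longrightarrow> k < n \<Longrightarrow> card (window n k) = n div 2"
  unfolding window_def by (cases "k < n div 2") auto

lemma parity_pattern_subset: "parity_pattern n Y \<subseteq> {..<n}"
  unfolding parity_pattern_def by auto

lemma parity_pattern_sym_diff:
  "finite A \<Longrightarrow> finite B \<Longrightarrow>
   parity_pattern n (sym_diff A B) = sym_diff (parity_pattern n A) (parity_pattern n B)"
  by (rule set_eqI) (simp add: parity_pattern_def odd_card_sym_diff_Int; blast)

lemma parity_pattern_eq_empty:
  assumes n: "n mod 4 = 2" and Z: "Z \<subseteq> {..<n}" and "parity_pattern n Z = {}"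
  shows "Z = {}"
proof -
  define m where "m = n div 2"
  have m: "n = 2 * m" "odd m" using n unfolding m_def by presburger+
  define \<alpha> where "\<alpha> = card (Z \<inter> {1..<m})"
  define \<beta> where "\<beta> = card (Z \<inter> {m..<n - 1})"
  have ev: "even (card (Z \<inter> window n k))" if "k < n" for k
    using assms(3) that unfolding parity_pattern_def by blast
  have fin: "finite (Z \<inter> A)" for A using Z finite_subset by blast
  have low: "k \<in> Z \<longleftrightarrow> odd \<beta>" if "k < m" for k
  proof -
    have "Z \<inter> window n k = (if k \<in> Z then insert k (Z \<inter> {m..<n - 1}) else Z \<inter> {m..<n - 1})"
      using that unfolding window_def m_def by auto
    then have "card (Z \<inter> window n k) = (if k \<in> Z then Suc \<beta> else \<beta>)"
      using that fin unfolding \<beta>_def by simp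
    then show ?thesis using ev[of k] that m by (auto split: if_splits)
  qed
  have high: "k \<in> Z \<longleftrightarrow> odd \<alpha>" if "m \<le> k" "k < n" for k
  proof -
    have "Z \<inter> window n k = (if k \<in> Z then insert k (Z \<inter> {1..<m}) else Z \<inter> {1..<m})"
      using that unfolding window_def m_def by auto
    then have "card (Z \<inter> window n k) = (if k \<in> Z then Suc \<alpha> else \<alpha>)"
      using that fin unfolding \<alpha>_def by simp
    then show ?thesis using ev[of k] that by (auto split: if_splits)
  qed
  show ?thesis
  proof (cases "odd \<beta>")
    case True
    then have "Z \<inter> {1..<m} = {1..<m}" using low by auto
    then have "even \<alpha>" using m unfolding \<alpha>_def by simp
    then have "Z \<inter> {m..<n - 1} = {}" using high by auto
    then show ?thesis using True unfolding \<beta>_def by simp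
  next
    case False
    then have "Z \<inter> {1..<m} = {}" using low by auto
    then have "even \<alpha>" unfolding \<alpha>_def by simp
    then have "k \<notin> Z" if "k < n" for k
      using low high False that by (cases "k < m") auto
    then show ?thesis using Z by blast
  qed
qed

lemma inj_on_parity_pattern:
  assumes "n mod 4 = 2"
  shows "inj_on (parity_pattern n) (Pow {..<n})"
proof (rule inj_onI)
  fix A B assume AB: "A \<in> Pow {..<n}" "B \<in> Pow {..<n}" "parity_pattern n A = parity_pattern n B"
  then have "finite A" "finite B" by (auto intro: finite_subset)
  then have "parity_pattern n (sym_diff A B) = {}"
    using AB(3) by (simp add: parity_pattern_sym_diff)
  moreover have "sym_diff A B \<subseteq> {..<n}" using AB(1,2) by blast
  ultimately have "sym_diff A B = {}"
    by (rule parity_pattern_eq_empty[OF assms, rotated])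
  then show "A = B" by blast
qed

lemma bij_betw_parity_pattern:
  assumes "n mod 4 = 2"
  shows "bij_betw (parity_pattern n) (Pow {..<n}) (Pow {..<n})"
proof -
  have "parity_pattern n ` Pow {..<n} \<subseteq> Pow {..<n}"
    using parity_pattern_subset by blast
  then show ?thesis
    using inj_on_parity_pattern[OF assms] by (simp add: bij_betw_def endo_inj_surj)
qed

lemma involution_swapping_complement:
  assumes "finite A" "S \<subseteq> A" "card S = card (A - S)"
  obtains \<pi> where "\<And>x. x \<in> A \<Longrightarrow> \<pi> x \<in> A" "\<And>x. x \<in> A \<Longrightarrow> \<pi> (\<pi> x) = x"
    "\<And>x. x \<in> A \<Longrightarrow> \<pi> x \<in> S \<longleftrightarrow> x \<notin> S"
proof -
  obtain g where g: "bij_betw g S (A - S)"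
    using finite_same_card_bij assms by (metis finite_Diff finite_subset)
  define \<pi> where "\<pi> x = (if x \<in> S then g x else inv_into S g x)" for x
  have "\<pi> x \<in> A \<and> \<pi> (\<pi> x) = x \<and> (\<pi> x \<in> S \<longleftrightarrow> x \<notin> S)" if "x \<in> A" for x
  proof (cases "x \<in> S")
    case True
    then have "g x \<in> A - S" using g by (auto simp: bij_betw_def)
    then show ?thesis using True g by (simp add: \<pi>_def bij_betw_inv_into_left)
  next
    case False
    then have "inv_into S g x \<in> S" using g that by (metis Diff_iff bij_betw_def inv_into_into)
    then show ?thesis
      using False g that assms(2) by (auto simp: \<pi>_def bij_betw_inv_into_right)
  qed
  then show ?thesis using that by blast
qed

definition layer :: "nat \<Rightarrow> nat set \<Rightarrow> nat set set" where
  "layer n D = {Z. Z \<subseteq> {..<n} \<and> card Z \<in> D}"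

lemma finite_layer: "finite (layer n D)"
  unfolding layer_def by (rule finite_subset[of _ "Pow {..<n}"]) auto

lemma card_odd_Int_eq_card_even_Int:
  assumes S: "S \<subseteq> {..<n}" "n = 2 * card S" "odd (card S)"
    and D: "\<forall>d\<in>D. even d \<longrightarrow> n - d \<in> D"
  shows "card {Z \<in> layer n D. odd (card (Z \<inter> S))} = card {Z \<in> layer n D. even (card (Z \<inter> S))}"
proof -
  have fS: "finite S" using S(1) finite_subset by blast
  have "card S = card ({..<n} - S)" using S fS by (simp add: card_Diff_subset)
  then obtain \<pi> where \<pi>: "\<And>x. x < n \<Longrightarrow> \<pi> x < n" "\<And>x. x < n \<Longrightarrow> \<pi> (\<pi> x) = x"
      "\<And>x. x < n \<Longrightarrow> \<pi> x \<in> S \<longleftrightarrow> x \<notin> S"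
    using involution_swapping_complement[of "{..<n}" S] S(1) by auto
  define \<tau> where "\<tau> Z = (if odd (card Z) then \<pi> ` Z else {..<n} - Z)" for Z
  have \<tau>: "\<tau> Z \<in> layer n D \<and> \<tau> (\<tau> Z) = Z \<and> (odd (card (\<tau> Z \<inter> S)) \<longleftrightarrow> even (card (Z \<inter> S)))"
    if Z: "Z \<in> layer n D" for Z
  proof -
    have Zn: "Z \<subseteq> {..<n}" "card Z \<in> D" and fZ: "finite Z"
      using Z unfolding layer_def by (auto intro: finite_subset)
    have split: "card Z = card (Z \<inter> S) + card (Z - S)"
      using fZ by (metis Diff_Diff_Int card_Diff_subset_Int card_mono finite_Int inf_le1
          le_add_diff_inverse inf_commute)
    show ?thesis
    proof (cases "odd (card Z)")
      case True
      have inj: "inj_on \<pi> Z" using Zn \<pi>(2) by (metis inj_on_inverseI lessThan_iff subsetD)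
      have "\<pi> ` Z \<inter> S = \<pi> ` (Z - S)" using Zn \<pi>(3) by auto
      then have "card (\<pi> ` Z \<inter> S) = card (Z - S)"
        using inj by (simp add: card_image inj_on_subset)
      moreover have "\<pi> ` \<pi> ` Z = Z" using Zn \<pi>(2) by (force simp: image_comp)
      moreover have "\<pi> ` Z \<subseteq> {..<n}" using Zn \<pi>(1) by auto
      ultimately show ?thesis
        using True split Zn inj by (simp add: \<tau>_def layer_def card_image)
    next
      case False
      have "card Z \<le> n" using card_mono[OF _ Zn(1)] by simp
      then have c: "card ({..<n} - Z) = n - card Z" "even (n - card Z)"
        using Zn fZ False S(2) by (simp_all add: card_Diff_subset)
      have "({..<n} - Z) \<inter> S = S - Z \<inter> S" using S(1) by auto
      then have "card (({..<n} - Z) \<inter> S) = card S - card (Z \<inter> S)"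
        using fS by (simp add: card_Diff_subset)
      moreover have "card (Z \<inter> S) \<le> card S" using fS by (simp add: card_mono)
      moreover have "n - card Z \<in> D" using D Zn False by auto
      ultimately show ?thesis
        using c False S(3) Zn by (auto simp: \<tau>_def layer_def)
    qed
  qed
  have "bij_betw \<tau> {Z \<in> layer n D. odd (card (Z \<inter> S))} {Z \<in> layer n D. even (card (Z \<inter> S))}"
    by (rule bij_betw_byWitness[where f' = \<tau>]) (use \<tau> in auto)
  then show ?thesis by (rule bij_betw_same_card)
qed

lemma sum_set_encode:
  assumes "finite L" "\<And>Z. Z \<in> L \<Longrightarrow> G Z \<subseteq> {..<n}"
  shows "(\<Sum>Z\<in>L. set_encode (G Z)) = (\<Sum>k<n. 2 ^ k * card {Z \<in> L. k \<in> G Z})"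
proof -
  have "set_encode (G Z) = (\<Sum>k<n. if k \<in> G Z then 2 ^ k else 0)" if "Z \<in> L" for Z
    using assms(2)[OF that] by (simp add: set_encode_def sum.If_cases Int_absorb1)
  then have "(\<Sum>Z\<in>L. set_encode (G Z)) = (\<Sum>k<n. \<Sum>Z\<in>L. if k \<in> G Z then 2 ^ k else 0)"
    by (simp add: sum.swap[of _ "{..<n}"])
  also have "\<dots> = (\<Sum>k<n. 2 ^ k * card {Z \<in> L. k \<in> G Z})"
    using assms(1) by (simp add: sum.If_cases Int_def mult.commute)
  finally show ?thesis .
qed

definition label :: "nat \<Rightarrow> nat set \<Rightarrow> nat" where
  "label n Y = Suc (set_encode (parity_pattern n Y))"

lemma card_layer_parity_pattern_sym_diff:
  assumes n: "n mod 4 = 2" and D: "\<forall>d\<in>D. even d \<longrightarrow> n - d \<in> D" and X: "finite X" and k: "k < n"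
  shows "card {Z \<in> layer n D. k \<in> parity_pattern n (sym_diff X Z)}
       = card {Z \<in> layer n D. k \<in> parity_pattern n Z}"
proof -
  have fin: "finite Z" if "Z \<in> layer n D" for Z
    using that unfolding layer_def by (auto intro: finite_subset)
  have eq: "{Z \<in> layer n D. k \<in> parity_pattern n (sym_diff X Z)}
      = {Z \<in> layer n D. (k \<in> parity_pattern n X) \<noteq> (k \<in> parity_pattern n Z)}"
    using parity_pattern_sym_diff[OF X fin] by blast
  have "card {Z \<in> layer n D. k \<in> parity_pattern n Z} = card {Z \<in> layer n D. k \<notin> parity_pattern n Z}"
    using card_odd_Int_eq_card_even_Int[OF window_subset[OF k] _ _ D] card_window[of n k] n k
    by (simp add: parity_pattern_def) presburger
  then show ?thesis unfolding eq by (cases "k \<in> parity_pattern n X") simp_all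
qed

lemma sum_label_sym_diff:
  assumes "n mod 4 = 2" "\<forall>d\<in>D. even d \<longrightarrow> n - d \<in> D" "finite X"
  shows "(\<Sum>Z\<in>layer n D. label n (sym_diff X Z)) = (\<Sum>Z\<in>layer n D. label n Z)"
proof -
  have "(\<Sum>Z\<in>layer n D. set_encode (parity_pattern n (sym_diff X Z)))
      = (\<Sum>k<n. 2 ^ k * card {Z \<in> layer n D. k \<in> parity_pattern n (sym_diff X Z)})"
    by (rule sum_set_encode[OF finite_layer parity_pattern_subset])
  also have "\<dots> = (\<Sum>k<n. 2 ^ k * card {Z \<in> layer n D. k \<in> parity_pattern n Z})"
    using card_layer_parity_pattern_sym_diff[OF assms] by simp
  also have "\<dots> = (\<Sum>Z\<in>layer n D. set_encode (parity_pattern n Z))"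
    by (rule sum_set_encode[symmetric, OF finite_layer parity_pattern_subset])
  finally show ?thesis unfolding label_def Suc_eq_plus1 sum.distrib by simp
qed

lemma bits_dist_nbhd:
  assumes x: "x \<in> hcube_verts n"
  shows "bits n ` dist_nbhd (hcube_verts n) hcube_adj D x = sym_diff (bits n x) ` layer n D"
proof -
  have bx: "bits n x \<subseteq> {..<n}" by (auto simp: bits_def)
  have sym_diff_cancel: "sym_diff (bits n x) (sym_diff (bits n x) Z) = Z" for Z by blast
  have "dist_nbhd (hcube_verts n) hcube_adj D x
      = {y \<in> hcube_verts n. card (sym_diff (bits n x) (bits n y)) \<in> D}"
    using x by (auto simp: dist_nbhd_def hcube_graph_dist_bits)
  then have "bits n ` dist_nbhd (hcube_verts n) hcube_adj D x
      = bits n ` {y \<in> hcube_verts n. card (sym_diff (bits n x) (bits n y)) \<in> D}"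
    by simp
  also have "\<dots> = {Y \<in> bits n ` hcube_verts n. card (sym_diff (bits n x) Y) \<in> D}"
    by blast
  also have "\<dots> = {Y \<in> Pow {..<n}. card (sym_diff (bits n x) Y) \<in> D}"
    using bij_betw_bits[of n] by (simp add: bij_betw_def)
  also have "\<dots> = sym_diff (bits n x) ` layer n D"
  proof (intro equalityI subsetI)
    fix Y assume "Y \<in> {Y \<in> Pow {..<n}. card (sym_diff (bits n x) Y) \<in> D}"
    then show "Y \<in> sym_diff (bits n x) ` layer n D"
      using bx sym_diff_cancel[of Y, symmetric]
      by (intro image_eqI[of _ _ "sym_diff (bits n x) Y"]) (auto simp: layer_def)
  next
    fix Y assume "Y \<in> sym_diff (bits n x) ` layer n D"
    then obtain Z where "Z \<subseteq> {..<n}" "card Z \<in> D" "Y = sym_diff (bits n x) Z"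
      unfolding layer_def by blast
    then show "Y \<in> {Y \<in> Pow {..<n}. card (sym_diff (bits n x) Y) \<in> D}"
      using bx sym_diff_cancel by auto
  qed
  finally show ?thesis .
qed

lemma bij_betw_set_encode: "bij_betw set_encode (Pow {..<n}) {..<2 ^ n}"
proof -
  have inj: "inj_on set_encode (Pow {..<n})"
    using inj_on_set_encode by (rule inj_on_subset) (auto intro: finite_subset)
  have "set_encode A < 2 ^ n" if "A \<subseteq> {..<n}" for A
  proof -
    have "set_encode A \<le> (\<Sum>k<n. 2 ^ k)"
      unfolding set_encode_def using that by (intro sum_mono2) auto
    moreover have "(\<Sum>k<n. 2 ^ k) = (2::nat) ^ n - 1"
      using sum_power2[of n] by (simp add: atLeast0LessThan)
    ultimately show ?thesis
      using zero_less_power[of "2::nat" n] by linarith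
  qed
  then have "set_encode ` Pow {..<n} \<subseteq> {..<2 ^ n}" by auto
  moreover have "card (set_encode ` Pow {..<n}) = card {..<(2::nat) ^ n}"
    using inj by (simp add: card_image card_Pow)
  ultimately have "set_encode ` Pow {..<n} = {..<2 ^ n}"
    by (intro card_subset_eq) auto
  with inj show ?thesis unfolding bij_betw_def ..
qed

lemma bij_betw_label:
  assumes "n mod 4 = 2"
  shows "bij_betw (\<lambda>x. label n (bits n x)) (hcube_verts n) {1..card (hcube_verts n)}"
proof -
  have "card (hcube_verts n) = 2 ^ n"
    using bij_betw_same_card[OF bij_betw_bits] by (simp add: card_Pow)
  moreover have "bij_betw (\<lambda>x. label n (bits n x)) (hcube_verts n) {1..2 ^ n}"
  proof -
    have "bij_betw (parity_pattern n \<circ> bits n) (hcube_verts n) (Pow {..<n})"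
      using bij_betw_bits bij_betw_parity_pattern[OF assms] by (rule bij_betw_trans)
    then have "bij_betw (set_encode \<circ> (parity_pattern n \<circ> bits n)) (hcube_verts n) {..<2 ^ n}"
      using bij_betw_set_encode by (rule bij_betw_trans)
    moreover have "bij_betw Suc {..<2 ^ n} {1..2 ^ n}"
      by (simp add: image_Suc_lessThan)
    ultimately have "bij_betw (Suc \<circ> (set_encode \<circ> (parity_pattern n \<circ> bits n))) (hcube_verts n) {1..2 ^ n}"
      by (rule bij_betw_trans)
    then show ?thesis by (simp add: label_def comp_def)
  qed
  ultimately show ?thesis by simp
qed

lemma sum_dist_nbhd_label:
  assumes n: "n mod 4 = 2" and D: "\<forall>d\<in>D. even d \<longrightarrow> n - d \<in> D" and x: "x \<in> hcube_verts n"
  shows "(\<Sum>y\<in>dist_nbhd (hcube_verts n) hcube_adj D x. label n (bits n y)) = (\<Sum>Z\<in>layer n D. label n Z)"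
proof -
  have "inj_on (bits n) (dist_nbhd (hcube_verts n) hcube_adj D x)"
    using bij_betw_bits by (rule bij_betw_imp_inj_on[THEN inj_on_subset]) (simp add: dist_nbhd_def)
  then have "(\<Sum>y\<in>dist_nbhd (hcube_verts n) hcube_adj D x. label n (bits n y))
      = (\<Sum>Y\<in>sym_diff (bits n x) ` layer n D. label n Y)"
    by (simp add: sum.reindex bits_dist_nbhd[OF x, symmetric])
  also have "\<dots> = (\<Sum>Z\<in>layer n D. label n (sym_diff (bits n x) Z))"
    by (rule sum.reindex_cong[where l = "sym_diff (bits n x)"]) (auto intro!: inj_onI)
  also have "\<dots> = (\<Sum>Z\<in>layer n D. label n Z)"
    by (rule sum_label_sym_diff[OF n D]) (simp add: bits_def)
  finally show ?thesis .
qed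

theorem theorem3p1:
  fixes n :: nat and E I :: "nat set"
  assumes "n mod 4 = 2"
    and "E \<noteq> {}"
    and "E \<subseteq> {i. odd i \<and> 1 \<le> i \<and> i \<le> n - 1}"
    and "I \<subseteq> {0..n div 2}"
    and "\<forall>i\<in>I. E \<inter> {i, n - i} = {}"
  shows "D_magic (hcube_verts n) hcube_adj (E \<union> (\<Union>i\<in>I. {i, n - i}))"
proof -
  let ?D = "E \<union> (\<Union>i\<in>I. {i, n - i})"
  have "\<forall>d\<in>?D. even d \<longrightarrow> n - d \<in> ?D"
    using assms(3,4) by force
  then have "\<forall>x\<in>hcube_verts n. (\<Sum>y\<in>dist_nbhd (hcube_verts n) hcube_adj ?D x. label n (bits n y))
      = (\<Sum>Z\<in>layer n ?D. label n Z)"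
    using sum_dist_nbhd_label[OF assms(1)] by blast
  then show ?thesis
    using bij_betw_label[OF assms(1)]
    unfolding D_magic_def is_D_magic_labeling_def by blast
qed

end
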